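(* Let $\nu>0$ and $L_1,L_2>0$. For every $\gamma>\nu+1/2$ and every $Q>0$ with \[ Q\leq L_1^2\Big(\sum_{k\geq1}k^{2(\nu-\gamma)}\Big)^{-1}, \] one has \[ \tilde W(\gamma,Q)\cap\{f\in L_\infty(\mathbb{T}):\|f\|_\infty\geq L_2\}\subset\Lambda_\nu(L_1,L_2). \]
   Context: Let $\varphi_1\equiv1$, $\varphi_{2k}(x)=\sqrt2\cos(kx)$, $\varphi_{2k+1}(x)=\sqrt2\sin(kx)$ ($k\geq1$), orthonormal in $L_2$ of the uniform law on $[0,2\pi]$ with inner product $\langle f,g\rangle=\frac1{2\pi}\int_0^{2\pi}fg$; for a $2\pi$-periodic $f$ set $\beta_k(f)=\langle f,\varphi_k\rangle$. $L_2(\mathbb{T})$, $L_\infty(\mathbb{T})$ denote the corresponding spaces of $2\pi$-periodic functions. For $\gamma,Q>0$, $\tilde W(\gamma,Q)=\{f\in L_2(\mathbb{T}) : f=\sum_{k\geq1}\beta_k\varphi_k,\ \sum_{k\geq1}k^{2\gamma}\beta_k^2\leq Q\}$. For $\nu,L_1,L_2>0$, $\Lambda_\nu(L_1,L_2)=\{f\in L_\infty(\mathbb{T}):\sum_{k\geq1}k^\nu|\beta_k(f)|\leq L_1 \text{ and } \|f\|_\infty\geq L_2\}$. *)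

theory Defs
  imports "HOL-Analysis.Analysis" "HOL-Probability.Essential_Supremum"
begin

definition periodic2pi :: "(real \<Rightarrow> real) \<Rightarrow> bool" where
  "periodic2pi f \<longleftrightarrow> (\<forall>x. f (x + 2 * pi) = f x)"

text \<open>Trigonometric basis, indexed from 1: phi 1 = 1, phi (2k) = sqrt 2 cos(kx),
  phi (2k+1) = sqrt 2 sin(kx). The value at index 0 is irrelevant.\<close>
definition phi :: "nat \<Rightarrow> real \<Rightarrow> real" where
  "phi k x = (if k = 1 then 1
              else if even k then sqrt 2 * cos (real (k div 2) * x)
              else sqrt 2 * sin (real (k div 2) * x))"

definition beta :: "nat \<Rightarrow> (real \<Rightarrow> real) \<Rightarrow> real" where
  "beta k f = (1 / (2 * pi)) * (LINT x:{0..2*pi}|lborel. f x * phi k x)"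

definition L2T :: "(real \<Rightarrow> real) set" where
  "L2T = {f. periodic2pi f \<and> f \<in> borel_measurable borel
            \<and> set_integrable lborel {0..2*pi} (\<lambda>x. (f x)\<^sup>2)}"

definition sup_norm :: "(real \<Rightarrow> real) \<Rightarrow> ereal" where
  "sup_norm f = esssup (restrict_space lborel {0..2*pi}) (\<lambda>x. ereal \<bar>f x\<bar>)"

definition LinfT :: "(real \<Rightarrow> real) set" where
  "LinfT = {f. periodic2pi f \<and> f \<in> borel_measurable borel \<and> sup_norm f < \<infinity>}"

text \<open>Sobolev-type ellipsoid; the condition f = sum beta_k phi_k holds (in L2) for every
  f in L2T, so only the weighted summability bound is a genuine constraint.\<close>
definition Wtilde :: "real \<Rightarrow> real \<Rightarrow> (real \<Rightarrow> real) set" where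
  "Wtilde \<gamma> Q = {f \<in> L2T.
      summable (\<lambda>k. real (Suc k) powr (2 * \<gamma>) * (beta (Suc k) f)\<^sup>2)
      \<and> (\<Sum>k. real (Suc k) powr (2 * \<gamma>) * (beta (Suc k) f)\<^sup>2) \<le> Q}"

definition Lambda :: "real \<Rightarrow> real \<Rightarrow> real \<Rightarrow> (real \<Rightarrow> real) set" where
  "Lambda \<nu> L1 L2 = {f \<in> LinfT.
      summable (\<lambda>k. real (Suc k) powr \<nu> * \<bar>beta (Suc k) f\<bar>)
      \<and> (\<Sum>k. real (Suc k) powr \<nu> * \<bar>beta (Suc k) f\<bar>) \<le> L1
      \<and> sup_norm f \<ge> ereal L2}"

end

theory Submission
  imports Defs
begin

text \<open>Split \<open>k^\<nu> |\<beta>_k| = (k^\<gamma> |\<beta>_k|) * k^(\<nu>-\<gamma>)\<close> and apply Cauchy--Schwarz for series: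
  \<open>(\<Sum> k^\<nu> |\<beta>_k|)^2 \<le> (\<Sum> k^(2\<gamma>) \<beta>_k^2) * (\<Sum> k^(2(\<nu>-\<gamma>))) \<le> Q * \<Sum> k^(2(\<nu>-\<gamma>)) \<le> L1^2\<close>;
  the last series converges because \<open>2(\<nu>-\<gamma>) < -1\<close>.\<close>

lemma summable_mult_of_summable_squares:
  fixes a b :: "nat \<Rightarrow> real"
  assumes "summable (\<lambda>k. (a k)\<^sup>2)" and "summable (\<lambda>k. (b k)\<^sup>2)"
  shows "summable (\<lambda>k. a k * b k)"
proof (rule summable_norm_cancel, rule summable_comparison_test)
  show "summable (\<lambda>k. ((a k)\<^sup>2 + (b k)\<^sup>2) / 2)"
    using assms by (intro summable_divide summable_add)
  have "norm (norm (a k * b k)) \<le> ((a k)\<^sup>2 + (b k)\<^sup>2) / 2" for k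
    using sum_squares_bound[of "\<bar>a k\<bar>" "\<bar>b k\<bar>"] by (simp add: abs_mult)
  then show "\<exists>N. \<forall>k\<ge>N. norm (norm (a k * b k)) \<le> ((a k)\<^sup>2 + (b k)\<^sup>2) / 2"
    by blast
qed

lemma Cauchy_Schwarz_ineq_suminf:
  fixes a b :: "nat \<Rightarrow> real"
  assumes a: "summable (\<lambda>k. (a k)\<^sup>2)" and b: "summable (\<lambda>k. (b k)\<^sup>2)"
  shows "(\<Sum>k. a k * b k)\<^sup>2 \<le> (\<Sum>k. (a k)\<^sup>2) * (\<Sum>k. (b k)\<^sup>2)"
proof (rule LIMSEQ_le)
  have ab: "summable (\<lambda>k. a k * b k)"
    using a b by (rule summable_mult_of_summable_squares)
  show "(\<lambda>n. (\<Sum>k<n. a k * b k)\<^sup>2) \<longlonglongrightarrow> (\<Sum>k. a k * b k)\<^sup>2"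
    using ab by (intro tendsto_power summable_LIMSEQ)
  show "(\<lambda>n. (\<Sum>k<n. (a k)\<^sup>2) * (\<Sum>k<n. (b k)\<^sup>2))
          \<longlonglongrightarrow> (\<Sum>k. (a k)\<^sup>2) * (\<Sum>k. (b k)\<^sup>2)"
    using a b by (intro tendsto_mult summable_LIMSEQ)
  show "\<exists>N. \<forall>n\<ge>N. (\<Sum>k<n. a k * b k)\<^sup>2 \<le> (\<Sum>k<n. (a k)\<^sup>2) * (\<Sum>k<n. (b k)\<^sup>2)"
    using Cauchy_Schwarz_ineq_sum by blast
qed

lemma summable_Suc_powr_iff:
  "summable (\<lambda>k. real (Suc k) powr p) \<longleftrightarrow> p < -1"
  using summable_iff_shift[of "\<lambda>n. real n powr p" 1] summable_real_powr_iff[of p] by simp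

lemma powr_square: "((x::real) powr p)\<^sup>2 = x powr (2 * p)"
  by (simp add: power2_eq_square flip: powr_add)

theorem proposition5:
  fixes \<nu> L1 L2 \<gamma> Q :: real
  assumes "\<nu> > 0" and "L1 > 0" and "L2 > 0"
    and "\<gamma> > \<nu> + 1/2" and "Q > 0"
    and "Q \<le> L1\<^sup>2 / (\<Sum>k. real (Suc k) powr (2 * (\<nu> - \<gamma>)))"
  shows "Wtilde \<gamma> Q \<inter> {f \<in> LinfT. sup_norm f \<ge> ereal L2} \<subseteq> Lambda \<nu> L1 L2"
proof
  fix f assume f: "f \<in> Wtilde \<gamma> Q \<inter> {f \<in> LinfT. sup_norm f \<ge> ereal L2}"
  define a where "a k = real (Suc k) powr \<gamma> * \<bar>beta (Suc k) f\<bar>" for k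
  define b where "b k = real (Suc k) powr (\<nu> - \<gamma>)" for k
  define S where "S = (\<Sum>k. (b k)\<^sup>2)"
  have a2: "(a k)\<^sup>2 = real (Suc k) powr (2 * \<gamma>) * (beta (Suc k) f)\<^sup>2" for k
    by (simp add: a_def power_mult_distrib powr_square)
  have ab: "a k * b k = real (Suc k) powr \<nu> * \<bar>beta (Suc k) f\<bar>" for k
    by (simp add: a_def b_def mult_ac flip: powr_add)
  have a_sq: "summable (\<lambda>k. (a k)\<^sup>2)" "(\<Sum>k. (a k)\<^sup>2) \<le> Q"
    using f unfolding Wtilde_def a2 by auto
  have b_sq: "summable (\<lambda>k. (b k)\<^sup>2)"
    using assms(4) unfolding b_def powr_square summable_Suc_powr_iff by simp
  have "S > 0"
    unfolding S_def using b_sq by (rule suminf_pos) (simp add: b_def)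
  then have "Q * S \<le> L1\<^sup>2"
    using assms(6) by (simp add: S_def b_def powr_square pos_le_divide_eq)
  have "(\<Sum>k. a k * b k)\<^sup>2 \<le> (\<Sum>k. (a k)\<^sup>2) * S"
    unfolding S_def using a_sq(1) b_sq by (rule Cauchy_Schwarz_ineq_suminf)
  also have "\<dots> \<le> Q * S"
    using a_sq(2) \<open>S > 0\<close> by simp
  also note \<open>Q * S \<le> L1\<^sup>2\<close>
  finally have "(\<Sum>k. a k * b k) \<le> L1"
    using \<open>L1 > 0\<close> by (rule power2_le_imp_le[OF _ less_imp_le])
  moreover have "summable (\<lambda>k. a k * b k)"
    using a_sq(1) b_sq by (rule summable_mult_of_summable_squares)
  ultimately show "f \<in> Lambda \<nu> L1 L2"
    using f unfolding Lambda_def ab by blast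
qed

end
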